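(* Let $F$ be a distribution on $\mathbb{R}$ with $F\in\mathcal{S}$. Let $Y_1$ and $Y_2$ be random variables which are conditionally independent given some $\sigma$-algebra $\mathcal{F}$, and suppose that for some constants $c_1\ge0$, $c_2\ge0$ and $r>0$: (i) for $i=1,2$, $P(Y_i>y)\lesssim c_i\overline{F}(y)$ as $y\to\infty$ (where, when $c_i=0$, this means $P(Y_i>y)=o(\overline{F}(y))$ as $y\to\infty$); (ii) $P(Y_1>y\mid\mathcal{F})\le r\,\overline{F}(y)$ for all $y$, almost surely. Then $P(Y_1+Y_2>y)\lesssim(c_1+c_2)\,\overline{F}(y)$ as $y\to\infty$ (with the same interpretation if $c_1+c_2=0$).
   Context: $\overline{F}(y):=1-F(y)$. For functions $f,g$, $f(y)\lesssim g(y)$ as $y\to\infty$ means $\limsup_{y\to\infty}f(y)/g(y)\le1$. A distribution $G$ on $\mathbb{R}$ is subexponential ($G\in\mathcal{S}$) iff $G_+(y):=G(y)\mathbf{1}(y\ge0)$ satisfies $\overline{G_+^{*2}}(y)/\overline{G_+}(y)\to2$ as $y\to\infty$, where $G_+^{*2}$ is the convolution of $G_+$ with itself. *)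

theory Defs
  imports "HOL-Probability.Probability" "HOL-Library.Landau_Symbols"
begin

definition tailF :: "real measure \<Rightarrow> real \<Rightarrow> real" where
  "tailF G y = 1 - measure G {..y}"

text \<open>G_+ : the distribution with distribution function G(y) 1(y >= 0), i.e. the law of max(X,0).\<close>
definition pos_part_distr :: "real measure \<Rightarrow> real measure" where
  "pos_part_distr G = distr G borel (\<lambda>x. max x 0)"

definition subexponential :: "real measure \<Rightarrow> bool" where
  "subexponential G \<longleftrightarrow> prob_space G \<and> sets G = sets borel \<and>
     ((\<lambda>y. tailF (pos_part_distr G \<star> pos_part_distr G) y / tailF (pos_part_distr G) y)
        \<longlongrightarrow> 2) at_top"

definition asymp_le :: "(real \<Rightarrow> real) \<Rightarrow> (real \<Rightarrow> real) \<Rightarrow> bool" where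
  "asymp_le f g \<longleftrightarrow> Limsup at_top (\<lambda>y. ereal (f y / g y)) \<le> 1"

definition asymp_le_mult :: "(real \<Rightarrow> real) \<Rightarrow> real \<Rightarrow> (real \<Rightarrow> real) \<Rightarrow> bool" where
  "asymp_le_mult f c g \<longleftrightarrow>
     (if c = 0 then f \<in> o[at_top](g) else asymp_le f (\<lambda>y. c * g y))"

definition cprob_given :: "'a measure \<Rightarrow> 'a measure \<Rightarrow> 'a set \<Rightarrow> 'a \<Rightarrow> real" where
  "cprob_given M Fs A = real_cond_exp M Fs (indicator (A \<inter> space M))"

definition cond_indep_rv :: "'a measure \<Rightarrow> 'a measure \<Rightarrow> ('a \<Rightarrow> real) \<Rightarrow> ('a \<Rightarrow> real) \<Rightarrow> bool" where
  "cond_indep_rv M Fs X Y \<longleftrightarrow>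
     (\<forall>A \<in> sets borel. \<forall>B \<in> sets borel.
        AE \<omega> in M. cprob_given M Fs (X -` A \<inter> Y -` B) \<omega> =
                    cprob_given M Fs (X -` A) \<omega> * cprob_given M Fs (Y -` B) \<omega>)"

end

theory Submission
  imports Defs
begin

(* Replace F by its positive part G, which has the same tail on [0, infinity) and a larger tail
   below 0.  Fix a level h and split {Y1 + Y2 > y} into {Y1 > y - h}, {Y2 > y - h} and the
   event that both exceed h.  Cutting the last event along the strips h + k < Y2 <= h + k + 1,
   conditional independence together with (ii) bounds each piece by
   r Gbar(y - h - k - 1) P(h + k < Y2 <= h + k + 1).  Summation by parts and the bound
   P(Y2 > t) <= (c2 + 1) Gbar(t) for large t compare the resulting sum with the (G x G)-mass of
   {x1 + x2 > y - 1, x1 > h - 2, x2 > h}, which subexponentiality makes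
   (Gbar(h - 2) + Gbar(h) + o(1)) Gbar(y).  As G is long-tailed, Gbar(y - h) ~ Gbar(y), so
   limsup P(Y1 + Y2 > y) / Gbar(y) <= c1 + c2 + O(Gbar(h - 2)), and h -> infinity concludes. *)

section \<open>Positive part of a distribution\<close>

lemma real_distribution_pos_part_distr:
  assumes "prob_space F" "sets F = sets borel"
  shows "real_distribution (pos_part_distr F)"
proof -
  have "(\<lambda>x::real. max x 0) \<in> measurable F borel"
    using assms(2) by (simp cong: measurable_cong_sets)
  then have "prob_space (pos_part_distr F)"
    unfolding pos_part_distr_def by (rule prob_space.prob_space_distr[OF assms(1)])
  then show ?thesis
    by (simp add: real_distribution_def real_distribution_axioms_def pos_part_distr_def)
qed

lemma measure_pos_part_distr:
  assumes "sets F = sets borel" "A \<in> sets borel"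
  shows "measure (pos_part_distr F) A = measure F ((\<lambda>x. max x 0) -` A)"
proof -
  have "space F = UNIV" using assms(1) sets_eq_imp_space_eq by fastforce
  moreover have "(\<lambda>x::real. max x 0) \<in> measurable F borel"
    using assms(1) by (simp cong: measurable_cong_sets)
  ultimately show ?thesis
    unfolding pos_part_distr_def using assms(2) by (simp add: measure_distr)
qed

lemma measure_pos_part_distr_lessThan_0:
  assumes "sets F = sets borel"
  shows "measure (pos_part_distr F) {..<0} = 0"
proof -
  have "(\<lambda>x::real. max x 0) -` {..<0} = {}" by auto
  then show ?thesis using measure_pos_part_distr[OF assms, of "{..<0}"] by simp
qed

lemma tailF_pos_part_distr:
  assumes "sets F = sets borel"
  shows "tailF (pos_part_distr F) y = (if y < 0 then 1 else tailF F y)"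
proof -
  have "(\<lambda>x::real. max x 0) -` {..y} = (if y < 0 then {} else {..y})" by auto
  then show ?thesis
    unfolding tailF_def using measure_pos_part_distr[OF assms, of "{..y}"] by simp
qed

lemma tailF_le_tailF_pos_part_distr:
  assumes "sets F = sets borel"
  shows "tailF F y \<le> tailF (pos_part_distr F) y"
  using tailF_pos_part_distr[OF assms, of y] by (simp add: tailF_def)

section \<open>Asymptotic bounds on tail ratios\<close>

lemma filterlim_minus_const_at_top: "filterlim (\<lambda>y::real. y - c) at_top at_top"
  using filterlim_tendsto_add_at_top[OF tendsto_const[of "-c"] filterlim_ident] by simp

(* For positive g this says limsup f/g <= c; unlike asymp_le_mult it needs no case split on c = 0. *)
definition ratio_limsup_le :: "(real \<Rightarrow> real) \<Rightarrow> real \<Rightarrow> (real \<Rightarrow> real) \<Rightarrow> bool" where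
  "ratio_limsup_le f c g \<longleftrightarrow> (\<forall>d>0. \<forall>\<^sub>F y in at_top. f y \<le> (c + d) * g y)"

lemma ratio_limsup_leI:
  "(\<And>d. d > 0 \<Longrightarrow> \<forall>\<^sub>F y in at_top. f y \<le> (c + d) * g y) \<Longrightarrow> ratio_limsup_le f c g"
  unfolding ratio_limsup_le_def by blast

lemma ratio_limsup_leD:
  "ratio_limsup_le f c g \<Longrightarrow> d > 0 \<Longrightarrow> \<forall>\<^sub>F y in at_top. f y \<le> (c + d) * g y"
  unfolding ratio_limsup_le_def by blast

lemma asymp_le_mult_imp_ratio_limsup_le:
  assumes "asymp_le_mult f c g" "0 \<le> c" "\<And>y. 0 < g y"
  shows "ratio_limsup_le f c g"
proof (rule ratio_limsup_leI)
  fix d :: real assume "d > 0"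
  show "\<forall>\<^sub>F y in at_top. f y \<le> (c + d) * g y"
  proof (cases "c = 0")
    case True
    then have "f \<in> o[at_top](g)" using assms(1) by (simp add: asymp_le_mult_def)
    from landau_o.smallD[OF this \<open>d > 0\<close>] show ?thesis
      by eventually_elim (simp add: abs_of_pos abs_le_iff assms(3) True)
  next
    case False
    then have "c > 0" using assms(2) by simp
    have "Limsup at_top (\<lambda>y. ereal (f y / (c * g y))) \<le> 1"
      using assms(1) False by (simp add: asymp_le_mult_def asymp_le_def)
    also have "\<dots> < ereal (1 + d / c)" using \<open>c > 0\<close> \<open>d > 0\<close> by simp
    finally have "Limsup at_top (\<lambda>y. ereal (f y / (c * g y))) < ereal (1 + d / c)" .
    then have "\<forall>\<^sub>F y in at_top. ereal (f y / (c * g y)) < ereal (1 + d / c)"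
      by (rule Limsup_lessD)
    then show ?thesis
    proof eventually_elim
      case (elim y)
      have "0 < c * g y" using \<open>c > 0\<close> assms(3)[of y] by simp
      with elim have "f y \<le> (1 + d / c) * (c * g y)" by (simp add: divide_less_eq)
      also have "\<dots> = (c + d) * g y" using \<open>c > 0\<close> by (simp add: field_simps)
      finally show ?case .
    qed
  qed
qed

lemma ratio_limsup_le_imp_asymp_le_mult:
  assumes "ratio_limsup_le f c g" "0 \<le> c" "\<And>y. 0 < g y" "\<And>y. 0 \<le> f y"
  shows "asymp_le_mult f c g"
proof (cases "c = 0")
  case True
  have "f \<in> o[at_top](g)"
  proof (rule landau_o.smallI)
    fix d :: real assume "d > 0"
    from ratio_limsup_leD[OF assms(1) this]
    show "\<forall>\<^sub>F y in at_top. norm (f y) \<le> d * norm (g y)"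
      by eventually_elim (simp add: abs_of_pos abs_of_nonneg assms(3,4) True)
  qed
  then show ?thesis using True by (simp add: asymp_le_mult_def)
next
  case False
  then have "c > 0" using assms(2) by simp
  have "Limsup at_top (\<lambda>y. ereal (f y / (c * g y))) \<le> 1"
  proof (rule ereal_le_epsilon2)
    fix e :: real assume "0 < e"
    have "0 < c * e" using \<open>c > 0\<close> \<open>0 < e\<close> by simp
    from ratio_limsup_leD[OF assms(1) this]
    have "\<forall>\<^sub>F y in at_top. ereal (f y / (c * g y)) \<le> ereal (1 + e)"
    proof (elim eventually_mono)
      fix y assume "f y \<le> (c + c * e) * g y"
      moreover have "0 < c * g y" using \<open>c > 0\<close> assms(3)[of y] by simp
      ultimately show "ereal (f y / (c * g y)) \<le> ereal (1 + e)"
        by (simp add: divide_le_eq algebra_simps)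
    qed
    then have "Limsup at_top (\<lambda>y. ereal (f y / (c * g y))) \<le> ereal (1 + e)"
      by (rule Limsup_bounded)
    then show "Limsup at_top (\<lambda>y. ereal (f y / (c * g y))) \<le> 1 + ereal e"
      by (simp add: add.commute)
  qed
  then show ?thesis using False by (simp add: asymp_le_mult_def asymp_le_def)
qed

lemma ratio_limsup_le_cong:
  assumes "\<forall>\<^sub>F y in at_top. g y = g' y"
  shows "ratio_limsup_le f c g \<longleftrightarrow> ratio_limsup_le f c g'"
proof -
  have "(\<forall>\<^sub>F y in at_top. f y \<le> (c + d) * g y) \<longleftrightarrow> (\<forall>\<^sub>F y in at_top. f y \<le> (c + d) * g' y)" for d
    by (rule eventually_subst, rule eventually_mono[OF assms]) simp
  then show ?thesis by (simp add: ratio_limsup_le_def)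
qed

lemma ratio_limsup_le_mono:
  assumes "ratio_limsup_le f' c g" "\<forall>\<^sub>F y in at_top. f y \<le> f' y"
  shows "ratio_limsup_le f c g"
proof (rule ratio_limsup_leI)
  fix d :: real assume "d > 0"
  from ratio_limsup_leD[OF assms(1) this] assms(2)
  show "\<forall>\<^sub>F y in at_top. f y \<le> (c + d) * g y" by eventually_elim simp
qed

lemma ratio_limsup_le_add:
  assumes "ratio_limsup_le f a g" "ratio_limsup_le f' b g"
  shows "ratio_limsup_le (\<lambda>y. f y + f' y) (a + b) g"
proof (rule ratio_limsup_leI)
  fix d :: real assume "d > 0"
  have "d / 2 > 0" using \<open>d > 0\<close> by simp
  from ratio_limsup_leD[OF assms(1) this] ratio_limsup_leD[OF assms(2) this]
  show "\<forall>\<^sub>F y in at_top. f y + f' y \<le> (a + b + d) * g y"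
    by eventually_elim (simp add: algebra_simps)
qed

lemma ratio_limsup_le_scale:
  assumes "ratio_limsup_le f c g" "0 < k"
  shows "ratio_limsup_le (\<lambda>y. k * f y) (k * c) g"
proof (rule ratio_limsup_leI)
  fix d :: real assume "d > 0"
  have "d / k > 0" using \<open>d > 0\<close> \<open>0 < k\<close> by simp
  from ratio_limsup_leD[OF assms(1) this]
  show "\<forall>\<^sub>F y in at_top. k * f y \<le> (k * c + d) * g y"
  proof (elim eventually_mono)
    fix y assume "f y \<le> (c + d / k) * g y"
    then have "k * f y \<le> k * ((c + d / k) * g y)" using \<open>0 < k\<close> by simp
    also have "\<dots> = (k * c + d) * g y" using \<open>0 < k\<close> by (simp add: field_simps)
    finally show "k * f y \<le> (k * c + d) * g y" .
  qed
qed

lemma ratio_limsup_le_tendsto: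
  assumes "((\<lambda>y. f y / g y) \<longlongrightarrow> c) at_top" "\<forall>\<^sub>F y in at_top. 0 < g y"
  shows "ratio_limsup_le f c g"
proof (rule ratio_limsup_leI)
  fix d :: real assume "d > 0"
  have "c < c + d" using \<open>d > 0\<close> by simp
  from order_tendstoD(2)[OF assms(1) this] assms(2)
  show "\<forall>\<^sub>F y in at_top. f y \<le> (c + d) * g y"
    by eventually_elim (simp add: divide_less_eq)
qed

lemma ratio_limsup_le_trans:
  assumes "ratio_limsup_le f c g" "ratio_limsup_le g c' g'" "0 \<le> c" "0 \<le> c'"
    and "\<forall>\<^sub>F y in at_top. 0 \<le> g' y"
  shows "ratio_limsup_le f (c * c') g'"
proof (rule ratio_limsup_leI)
  fix d :: real assume "d > 0"
  define \<delta> where "\<delta> = min 1 (d / (c + c' + 1))"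
  have "0 < \<delta>" using \<open>d > 0\<close> assms(3,4) by (simp add: \<delta>_def)
  have "(c + \<delta>) * (c' + \<delta>) = c * c' + \<delta> * (c + c' + \<delta>)" by (simp add: algebra_simps)
  also have "\<dots> \<le> c * c' + \<delta> * (c + c' + 1)"
    using \<open>0 < \<delta>\<close> by (intro add_left_mono mult_left_mono) (auto simp: \<delta>_def)
  also have "\<delta> * (c + c' + 1) \<le> d"
  proof -
    have "\<delta> \<le> d / (c + c' + 1)" by (simp add: \<delta>_def)
    with assms(3,4) show ?thesis by (simp add: pos_le_divide_eq)
  qed
  finally have \<delta>: "(c + \<delta>) * (c' + \<delta>) \<le> c * c' + d" by simp
  from ratio_limsup_leD[OF assms(1) \<open>0 < \<delta>\<close>] ratio_limsup_leD[OF assms(2) \<open>0 < \<delta>\<close>] assms(5)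
  show "\<forall>\<^sub>F y in at_top. f y \<le> (c * c' + d) * g' y"
  proof eventually_elim
    case (elim y)
    have "f y \<le> (c + \<delta>) * ((c' + \<delta>) * g' y)"
      by (rule order_trans[OF elim(1) mult_left_mono[OF elim(2)]]) (use \<open>0 < \<delta>\<close> assms(3) in simp)
    also have "\<dots> \<le> (c * c' + d) * g' y"
      using mult_right_mono[OF \<delta> elim(3)] by (simp add: mult.assoc)
    finally show ?case .
  qed
qed

lemma ratio_limsup_le_shift:
  assumes "ratio_limsup_le f c g"
  shows "ratio_limsup_le (\<lambda>y. f (y - s)) c (\<lambda>y. g (y - s))"
proof (rule ratio_limsup_leI)
  fix d :: real assume "d > 0"
  from eventually_compose_filterlim[OF ratio_limsup_leD[OF assms this] filterlim_minus_const_at_top]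
  show "\<forall>\<^sub>F y in at_top. f (y - s) \<le> (c + d) * g (y - s)" .
qed

lemma ratio_limsup_le_limit:
  fixes c :: "real \<Rightarrow> real"
  assumes "(c \<longlongrightarrow> c\<^sub>0) at_top" "\<forall>\<^sub>F h in at_top. ratio_limsup_le f (c h) g"
    and "\<forall>\<^sub>F y in at_top. 0 \<le> g y"
  shows "ratio_limsup_le f c\<^sub>0 g"
proof (rule ratio_limsup_leI)
  fix d :: real assume "d > 0"
  then have "d / 2 > 0" "c\<^sub>0 < c\<^sub>0 + d / 2" by simp_all
  from order_tendstoD(2)[OF assms(1) this(2)] assms(2)
  have "\<forall>\<^sub>F h in at_top. c h < c\<^sub>0 + d / 2 \<and> ratio_limsup_le f (c h) g"
    by eventually_elim simp
  then obtain h where h: "c h < c\<^sub>0 + d / 2" "ratio_limsup_le f (c h) g"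
    unfolding eventually_at_top_linorder by blast
  from ratio_limsup_leD[OF h(2) \<open>d / 2 > 0\<close>] assms(3)
  show "\<forall>\<^sub>F y in at_top. f y \<le> (c\<^sub>0 + d) * g y"
  proof eventually_elim
    case (elim y)
    then have "(c h + d / 2) * g y \<le> (c\<^sub>0 + d) * g y"
      using h(1) by (intro mult_right_mono) auto
    with elim show ?case by linarith
  qed
qed

section \<open>Conditional independence and the strip decomposition\<close>

lemma cprob_given_cong: "A \<inter> space M = B \<inter> space M \<Longrightarrow> cprob_given M F A = cprob_given M F B"
  by (simp add: cprob_given_def)

lemma (in finite_measure_subalgebra) integral_cprob_given:
  assumes "A \<in> sets M"
  shows "integrable M (cprob_given M F A)" "integral\<^sup>L M (cprob_given M F A) = measure M A"
proof -
  have "integrable M (indicator (A \<inter> space M) :: 'a \<Rightarrow> real)"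
    using assms by (intro integrable_real_indicator) (auto simp: less_top[symmetric])
  from real_cond_exp_int[OF this] assms
  show "integrable M (cprob_given M F A)" "integral\<^sup>L M (cprob_given M F A) = measure M A"
    unfolding cprob_given_def by (simp_all add: Int_absorb2 sets.sets_into_space)
qed

lemma (in finite_measure_subalgebra) AE_cprob_given_nonneg:
  "A \<in> sets M \<Longrightarrow> AE \<omega> in M. 0 \<le> cprob_given M F A \<omega>"
  unfolding cprob_given_def by (intro real_cond_exp_pos) auto

lemma prob_cond_indep_le:
  fixes M Fs :: "'a measure" and Y1 Y2 :: "'a \<Rightarrow> real"
  assumes "prob_space M" "subalgebra M Fs"
    and [measurable]: "Y1 \<in> borel_measurable M" "Y2 \<in> borel_measurable M"
    and indep: "cond_indep_rv M Fs Y1 Y2"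
    and bound: "AE \<omega> in M. cprob_given M Fs {\<omega> \<in> space M. Y1 \<omega> > a} \<omega> \<le> b"
    and [measurable]: "B \<in> sets borel"
  shows "measure M {\<omega> \<in> space M. a < Y1 \<omega> \<and> Y2 \<omega> \<in> B} \<le> b * measure M {\<omega> \<in> space M. Y2 \<omega> \<in> B}"
proof -
  interpret prob_space M by fact
  interpret finite_measure_subalgebra M Fs by unfold_locales fact
  let ?A = "Y1 -` {a<..}" and ?B = "Y2 -` B"
  have cA: "cprob_given M Fs {\<omega> \<in> space M. Y1 \<omega> > a} = cprob_given M Fs ?A"
    by (rule cprob_given_cong) auto
  have sets: "{\<omega> \<in> space M. Y2 \<omega> \<in> B} \<in> sets M" "{\<omega> \<in> space M. a < Y1 \<omega> \<and> Y2 \<omega> \<in> B} \<in> sets M"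
    by measurable
  have cB: "cprob_given M Fs {\<omega> \<in> space M. Y2 \<omega> \<in> B} = cprob_given M Fs ?B"
    and cAB: "cprob_given M Fs {\<omega> \<in> space M. a < Y1 \<omega> \<and> Y2 \<omega> \<in> B} = cprob_given M Fs (?A \<inter> ?B)"
    by (rule cprob_given_cong, auto)+
  note integral_B = integral_cprob_given[OF sets(1), unfolded cB]
    and integral_AB = integral_cprob_given[OF sets(2), unfolded cAB]
  have product: "AE \<omega> in M. cprob_given M Fs (?A \<inter> ?B) \<omega> = cprob_given M Fs ?A \<omega> * cprob_given M Fs ?B \<omega>"
    using indep unfolding cond_indep_rv_def by simp
  have [measurable]: "cprob_given M Fs A \<in> borel_measurable M" for A
    unfolding cprob_given_def by measurable
  have "measure M {\<omega> \<in> space M. a < Y1 \<omega> \<and> Y2 \<omega> \<in> B} = (\<integral>\<omega>. cprob_given M Fs ?A \<omega> * cprob_given M Fs ?B \<omega> \<partial>M)"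
    using integral_AB(2) integral_cong_AE[OF _ _ product] by simp
  also have "\<dots> \<le> (\<integral>\<omega>. b * cprob_given M Fs ?B \<omega> \<partial>M)"
  proof (rule integral_mono_AE)
    show "integrable M (\<lambda>\<omega>. cprob_given M Fs ?A \<omega> * cprob_given M Fs ?B \<omega>)"
      using integrable_cong_AE_imp[OF integral_AB(1) _ product] by simp
    show "integrable M (\<lambda>\<omega>. b * cprob_given M Fs ?B \<omega>)" using integral_B(1) by simp
    show "AE \<omega> in M. cprob_given M Fs ?A \<omega> * cprob_given M Fs ?B \<omega> \<le> b * cprob_given M Fs ?B \<omega>"
      using bound AE_cprob_given_nonneg[OF sets(1)] unfolding cA cB
      by eventually_elim (auto intro: mult_right_mono)
  qed
  also have "\<dots> = b * measure M {\<omega> \<in> space M. Y2 \<omega> \<in> B}" using integral_B(2) by simp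
  finally show ?thesis .
qed

context prob_space
begin

lemma prob_add_greater_le:
  fixes X Y :: "'a \<Rightarrow> real"
  assumes [measurable]: "X \<in> borel_measurable M" "Y \<in> borel_measurable M"
  shows "prob {\<omega> \<in> space M. X \<omega> + Y \<omega> > y} \<le> prob {\<omega> \<in> space M. X \<omega> > y - h}
    + prob {\<omega> \<in> space M. Y \<omega> > y - h} + prob {\<omega> \<in> space M. y < X \<omega> + Y \<omega> \<and> h < X \<omega> \<and> h < Y \<omega>}"
proof -
  have "prob {\<omega> \<in> space M. X \<omega> + Y \<omega> > y} \<le> prob ({\<omega> \<in> space M. X \<omega> > y - h}
      \<union> {\<omega> \<in> space M. Y \<omega> > y - h} \<union> {\<omega> \<in> space M. y < X \<omega> + Y \<omega> \<and> h < X \<omega> \<and> h < Y \<omega>})"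
    by (rule finite_measure_mono) (force, measurable)
  also have "\<dots> \<le> prob {\<omega> \<in> space M. X \<omega> > y - h}
    + prob {\<omega> \<in> space M. Y \<omega> > y - h} + prob {\<omega> \<in> space M. y < X \<omega> + Y \<omega> \<and> h < X \<omega> \<and> h < Y \<omega>}"
    by (intro order_trans[OF measure_Un_le] add_right_mono measure_Un_le) measurable
  finally show ?thesis .
qed

lemma prob_greaterThanAtMost:
  fixes X :: "'a \<Rightarrow> real"
  assumes [measurable]: "X \<in> borel_measurable M" and "u \<le> v"
  shows "prob {\<omega> \<in> space M. X \<omega> \<in> {u<..v}} = prob {\<omega> \<in> space M. X \<omega> > u} - prob {\<omega> \<in> space M. X \<omega> > v}"
proof -
  have "{\<omega> \<in> space M. X \<omega> \<in> {u<..v}} = {\<omega> \<in> space M. X \<omega> > u} - {\<omega> \<in> space M. X \<omega> > v}"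
    "{\<omega> \<in> space M. X \<omega> > v} \<subseteq> {\<omega> \<in> space M. X \<omega> > u}"
    using \<open>u \<le> v\<close> by auto
  then show ?thesis by (simp add: finite_measure_Diff)
qed

lemma prob_both_greater_le_strips:
  fixes X Y :: "'a \<Rightarrow> real"
  assumes [measurable]: "X \<in> borel_measurable M" "Y \<in> borel_measurable M"
  shows "prob {\<omega> \<in> space M. y < X \<omega> + Y \<omega> \<and> h < X \<omega> \<and> h < Y \<omega>}
    \<le> (\<Sum>k<n. prob {\<omega> \<in> space M. y - h - real k - 1 < X \<omega> \<and> Y \<omega> \<in> {h + real k<..h + real k + 1}})
      + prob {\<omega> \<in> space M. h < X \<omega> \<and> Y \<omega> \<in> {h + real n<..}}"
proof -
  define C where "C k = {\<omega> \<in> space M. y - h - real k - 1 < X \<omega> \<and> Y \<omega> \<in> {h + real k<..h + real k + 1}}" for k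
  define D where "D = {\<omega> \<in> space M. h < X \<omega> \<and> Y \<omega> \<in> {h + real n<..}}"
  have "{\<omega> \<in> space M. y < X \<omega> + Y \<omega> \<and> h < X \<omega> \<and> h < Y \<omega>} \<subseteq> (\<Union>k<n. C k) \<union> D"
  proof clarify
    fix \<omega> assume \<omega>: "\<omega> \<in> space M" "y < X \<omega> + Y \<omega>" "h < X \<omega>" "h < Y \<omega>" "\<omega> \<notin> D"
    then have "Y \<omega> \<le> h + real n" by (simp add: D_def)
    define k where "k = nat (\<lceil>Y \<omega> - h\<rceil> - 1)"
    have "0 < \<lceil>Y \<omega> - h\<rceil>" using \<omega>(4) by simp
    then have "real k = of_int \<lceil>Y \<omega> - h\<rceil> - 1" by (simp add: k_def)
    then have "real k < Y \<omega> - h" "Y \<omega> - h \<le> real k + 1"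
      using ceiling_correct[of "Y \<omega> - h"] by linarith+
    then have "k < n" "\<omega> \<in> C k"
      using \<omega> \<open>Y \<omega> \<le> h + real n\<close> by (auto simp: C_def)
    then show "\<omega> \<in> (\<Union>k<n. C k)" by blast
  qed
  then have "prob {\<omega> \<in> space M. y < X \<omega> + Y \<omega> \<and> h < X \<omega> \<and> h < Y \<omega>} \<le> prob ((\<Union>k<n. C k) \<union> D)"
    by (intro finite_measure_mono) (auto simp: C_def D_def)
  also have "\<dots> \<le> (\<Sum>k<n. prob (C k)) + prob D"
    by (intro order_trans[OF measure_Un_le] add_right_mono finite_measure_subadditive_finite)
      (auto simp: C_def D_def)
  finally show ?thesis by (simp add: C_def D_def)
qed

end

lemma sum_by_parts_lessThan:
  fixes a T :: "nat \<Rightarrow> 'a::comm_ring"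
  shows "(\<Sum>k<n. a k * (T k - T (Suc k))) + a n * T n = a 0 * T 0 + (\<Sum>k<n. (a (Suc k) - a k) * T (Suc k))"
  by (induction n) (simp_all add: algebra_simps)

section \<open>Distributions on the nonnegative reals\<close>

locale nonneg_real_distribution = real_distribution G for G :: "real measure" +
  assumes measure_lessThan_0: "measure G {..<0} = 0"
begin

lemma measure_greaterThan: "measure G {a<..} = tailF G a"
proof -
  have "{a<..} = space G - {..a}" by auto
  moreover have "prob (space G - {..a}) = 1 - prob {..a}" by (rule prob_compl) simp
  ultimately show ?thesis unfolding tailF_def by simp
qed

lemma measure_greaterThanAtMost: "a \<le> b \<Longrightarrow> measure G {a<..b} = tailF G a - tailF G b"
proof -
  assume "a \<le> b"
  then have "{a<..b} = {..b} - {..a}" "{..a} \<subseteq> {..b}" by auto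
  then show ?thesis unfolding tailF_def by (simp add: finite_measure_Diff)
qed

lemma measure_atLeast_0: "measure G {0..} = 1"
proof -
  have "{0..} = space G - {..<0}" by auto
  moreover have "prob (space G - {..<0}) = 1 - prob {..<0}" by (rule prob_compl) simp
  ultimately show ?thesis by (simp add: measure_lessThan_0)
qed

lemma measure_atLeastAtMost_0: "0 \<le> b \<Longrightarrow> measure G {0..b} = 1 - tailF G b"
proof -
  assume "0 \<le> b"
  then have "{..b} = {..<0} \<union> {0..b}" by auto
  moreover have "measure G ({..<0} \<union> {0..b}) = measure G {..<0} + measure G {0..b}"
    by (rule finite_measure_Union) auto
  ultimately show ?thesis unfolding tailF_def by (simp add: measure_lessThan_0)
qed

lemma tailF_antimono: "a \<le> b \<Longrightarrow> tailF G b \<le> tailF G a"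
  unfolding tailF_def by (intro diff_left_mono finite_measure_mono) auto

lemma tailF_nonneg: "0 \<le> tailF G a"
  unfolding tailF_def by simp

lemma tailF_tendsto_0: "(tailF G \<longlongrightarrow> 0) at_top"
proof -
  have "tailF G = (\<lambda>y. 1 - cdf G y)" by (simp add: fun_eq_iff tailF_def cdf_def)
  moreover have "((\<lambda>y. 1 - cdf G y) \<longlongrightarrow> 1 - 1) at_top"
    by (intro tendsto_intros cdf_lim_at_top_prob)
  ultimately show ?thesis by simp
qed

sublocale pair: prob_space "G \<Otimes>\<^sub>M G"
  by (simp add: prob_space_axioms prob_space_pair)

lemma measure_pair_Times:
  "A \<in> sets borel \<Longrightarrow> B \<in> sets borel \<Longrightarrow> measure (G \<Otimes>\<^sub>M G) (A \<times> B) = measure G A * measure G B"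
  unfolding measure_def by (simp add: emeasure_pair_measure_Times enn2real_mult)

lemma pair_sets_Collect:
  "{p \<in> space (G \<Otimes>\<^sub>M G). P (fst p) (snd p)} \<in> sets (G \<Otimes>\<^sub>M G) \<Longrightarrow>
   {p. P (fst p) (snd p)} \<in> sets (G \<Otimes>\<^sub>M G)"
  by (simp add: space_pair_measure)

lemma tailF_convolution: "tailF (G \<star> G) z = measure (G \<Otimes>\<^sub>M G) {p. z < fst p + snd p}"
proof -
  have "(\<lambda>(x, y). x + y) \<in> measurable (G \<Otimes>\<^sub>M G) (borel :: real measure)" by measurable
  then have "measure (G \<star> G) {..z} =
      measure (G \<Otimes>\<^sub>M G) ((\<lambda>(x, y). x + y) -` {..z} \<inter> space (G \<Otimes>\<^sub>M G))"
    unfolding convolution_def by (simp add: measure_distr)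
  also have "(\<lambda>(x, y). x + y) -` {..z} \<inter> space (G \<Otimes>\<^sub>M G) = space (G \<Otimes>\<^sub>M G) - {p. z < fst p + snd p}"
    by (auto simp: space_pair_measure)
  also have "measure (G \<Otimes>\<^sub>M G) \<dots> = 1 - measure (G \<Otimes>\<^sub>M G) {p. z < fst p + snd p}"
    by (intro pair.prob_compl pair_sets_Collect) measurable
  finally show ?thesis unfolding tailF_def by simp
qed

lemma measure_disjoint3_le_tailF_convolution:
  assumes sets: "A \<in> sets (G \<Otimes>\<^sub>M G)" "B \<in> sets (G \<Otimes>\<^sub>M G)" "C \<in> sets (G \<Otimes>\<^sub>M G)"
    and disj: "A \<inter> B = {}" "A \<inter> C = {}" "B \<inter> C = {}"
    and sub: "A \<union> B \<union> C \<subseteq> {p. z < fst p + snd p}"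
  shows "measure (G \<Otimes>\<^sub>M G) A + measure (G \<Otimes>\<^sub>M G) B + measure (G \<Otimes>\<^sub>M G) C \<le> tailF (G \<star> G) z"
proof -
  have "measure (G \<Otimes>\<^sub>M G) A + measure (G \<Otimes>\<^sub>M G) B + measure (G \<Otimes>\<^sub>M G) C
      = measure (G \<Otimes>\<^sub>M G) (A \<union> B \<union> C)"
    using sets disj by (simp add: pair.finite_measure_Union Int_Un_distrib2)
  also have "\<dots> \<le> measure (G \<Otimes>\<^sub>M G) {p. z < fst p + snd p}"
    by (intro pair.finite_measure_mono sub pair_sets_Collect) measurable
  finally show ?thesis by (simp add: tailF_convolution)
qed

lemma tailF_convolution_ge:
  assumes "0 \<le> s" "s \<le> y"
  shows "tailF G y + (1 - tailF G s) * tailF G y + (tailF G s - tailF G y) * tailF G (y - s)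
    \<le> tailF (G \<star> G) y"
proof -
  have "measure (G \<Otimes>\<^sub>M G) ({y<..} \<times> {0..}) + measure (G \<Otimes>\<^sub>M G) ({0..s} \<times> {y<..})
      + measure (G \<Otimes>\<^sub>M G) ({s<..y} \<times> {y-s<..}) \<le> tailF (G \<star> G) y"
    by (rule measure_disjoint3_le_tailF_convolution) (use assms in \<open>auto intro!: pair_measureI\<close>)
  with assms show ?thesis
    by (simp add: measure_pair_Times measure_greaterThan measure_atLeast_0 measure_atLeastAtMost_0
        measure_greaterThanAtMost)
qed

lemma measure_pair_both_greater_le:
  assumes "0 \<le> a" "0 \<le> b" "a + b < z"
  shows "measure (G \<Otimes>\<^sub>M G) {p. z < fst p + snd p \<and> a < fst p \<and> b < snd p}
    \<le> tailF (G \<star> G) z - (1 - tailF G a) * tailF G z - (1 - tailF G b) * tailF G z"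
proof -
  let ?A = "{p. z < fst p + snd p \<and> a < fst p \<and> b < snd p}"
  have "?A \<in> sets (G \<Otimes>\<^sub>M G)"
    by (rule pair_sets_Collect) measurable
  then have "measure (G \<Otimes>\<^sub>M G) ?A + measure (G \<Otimes>\<^sub>M G) ({0..a} \<times> {z<..})
      + measure (G \<Otimes>\<^sub>M G) ({z<..} \<times> {0..b}) \<le> tailF (G \<star> G) z"
    by (intro measure_disjoint3_le_tailF_convolution) (use assms in \<open>auto intro!: pair_measureI\<close>)
  with assms show ?thesis
    by (simp add: measure_pair_Times measure_greaterThan measure_atLeastAtMost_0 algebra_simps)
qed

lemma sum_measure_strips_le:
  assumes "real n < y - 2 * h + 1"
  shows "(\<Sum>k<n. measure G {y - h - real k - 2<..y - h - real k - 1} * tailF G (h + real k + 1))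
    \<le> measure (G \<Otimes>\<^sub>M G) {p. y - 1 < fst p + snd p \<and> h - 2 < fst p \<and> h < snd p}"
proof -
  define R where "R k = {y - h - real k - 2<..y - h - real k - 1} \<times> {h + real k + 1<..}" for k
  have R_sets: "R k \<in> sets (G \<Otimes>\<^sub>M G)" for k
    unfolding R_def by (auto intro!: pair_measureI)
  have "disjoint_family_on R {..<n}"
    unfolding disjoint_family_on_def
  proof (intro ballI impI equals0I)
    fix i j p assume "i \<noteq> j" "p \<in> R i \<inter> R j"
    then have "real i < real j + 1" "real j < real i + 1" by (auto simp: R_def)
    with \<open>i \<noteq> j\<close> show False by linarith
  qed
  then have "(\<Sum>k<n. measure (G \<Otimes>\<^sub>M G) (R k)) = measure (G \<Otimes>\<^sub>M G) (\<Union>k<n. R k)"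
    using R_sets by (intro pair.finite_measure_finite_Union[symmetric]) auto
  also have "\<dots> \<le> measure (G \<Otimes>\<^sub>M G) {p. y - 1 < fst p + snd p \<and> h - 2 < fst p \<and> h < snd p}"
  proof (intro pair.finite_measure_mono pair_sets_Collect)
    show "(\<Union>k<n. R k) \<subseteq> {p. y - 1 < fst p + snd p \<and> h - 2 < fst p \<and> h < snd p}"
      using assms by (force simp: R_def)
  qed measurable
  finally show ?thesis
    by (simp add: R_def measure_pair_Times measure_greaterThan)
qed

lemma sum_tailF_weighted_increments_le:
  fixes T :: "nat \<Rightarrow> real"
  assumes T_nonneg: "\<And>k. 0 \<le> T k" and T_le: "\<And>k. T k \<le> K * tailF G (h + real k)"
    and "0 \<le> K" and n: "real n < y - 2 * h + 1"
  shows "(\<Sum>k<n. tailF G (y - h - real k - 1) * (T k - T (Suc k)))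
    \<le> K * (tailF G (y - h - 1) * tailF G h
           + measure (G \<Otimes>\<^sub>M G) {p. y - 1 < fst p + snd p \<and> h - 2 < fst p \<and> h < snd p})"
proof -
  define a where "a k = tailF G (y - h - real k - 1)" for k
  have increment: "a (Suc k) - a k = measure G {y - h - real k - 2<..y - h - real k - 1}" for k
    unfolding a_def by (subst measure_greaterThanAtMost) (auto simp: algebra_simps)
  have "0 \<le> a n * T n"
    unfolding a_def using tailF_nonneg T_nonneg by (rule mult_nonneg_nonneg)
  then have "(\<Sum>k<n. a k * (T k - T (Suc k))) \<le> a 0 * T 0 + (\<Sum>k<n. (a (Suc k) - a k) * T (Suc k))"
    using sum_by_parts_lessThan[of a T n] by linarith
  moreover have "a 0 * T 0 \<le> a 0 * (K * tailF G h)"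
    using T_le[of 0] by (simp add: a_def mult_left_mono tailF_nonneg)
  moreover have "(\<Sum>k<n. (a (Suc k) - a k) * T (Suc k))
      \<le> (\<Sum>k<n. (a (Suc k) - a k) * (K * tailF G (h + real k + 1)))"
  proof (intro sum_mono mult_left_mono)
    fix k
    show "T (Suc k) \<le> K * tailF G (h + real k + 1)"
      using T_le[of "Suc k"] by (simp add: ac_simps)
  qed (simp add: increment)
  moreover have "\<dots> \<le> K * measure (G \<Otimes>\<^sub>M G) {p. y - 1 < fst p + snd p \<and> h - 2 < fst p \<and> h < snd p}"
    using mult_left_mono[OF sum_measure_strips_le[OF n] \<open>0 \<le> K\<close>]
    by (simp add: increment sum_distrib_left ac_simps)
  ultimately show ?thesis
    by (simp add: a_def algebra_simps)
qed

(* The strip part of the bound on P(Y1 + Y2 > y, Y1 > h, Y2 > h), divided by r K: the boundary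
   term of the summation by parts plus the bound on the mass of the region above. *)
definition both_large_tail_bound :: "real \<Rightarrow> real \<Rightarrow> real" where
  "both_large_tail_bound h y = tailF G (y - h - 1) * tailF G h + tailF (G \<star> G) (y - 1)
    - (2 - tailF G (h - 2) - tailF G h) * tailF G (y - 1)"

lemma prob_both_greater_le_tailF:
  fixes M :: "'b measure" and Y1 Y2 :: "'b \<Rightarrow> real"
  assumes "prob_space M" and [measurable]: "Y1 \<in> borel_measurable M" "Y2 \<in> borel_measurable M"
    and cond: "\<And>a B. B \<in> sets borel \<Longrightarrow> measure M {\<omega> \<in> space M. a < Y1 \<omega> \<and> Y2 \<omega> \<in> B}
      \<le> r * tailF G a * measure M {\<omega> \<in> space M. Y2 \<omega> \<in> B}"
    and Y2_tail: "\<And>t. h \<le> t \<Longrightarrow> measure M {\<omega> \<in> space M. Y2 \<omega> > t} \<le> K * tailF G t"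
    and "0 \<le> r" "0 \<le> K" "2 \<le> h" "2 * h \<le> y"
  shows "measure M {\<omega> \<in> space M. y < Y1 \<omega> + Y2 \<omega> \<and> h < Y1 \<omega> \<and> h < Y2 \<omega>}
    \<le> r * tailF G h * measure M {\<omega> \<in> space M. Y2 \<omega> > y - h} + r * K * both_large_tail_bound h y"
proof -
  interpret M: prob_space M by fact
  define T where "T k = M.prob {\<omega> \<in> space M. Y2 \<omega> > h + real k}" for k
  define n where "n = nat \<lceil>y - 2 * h\<rceil>"
  have n: "y - 2 * h \<le> real n" "real n < y - 2 * h + 1"
    using \<open>2 * h \<le> y\<close> ceiling_correct[of "y - 2 * h"] by (simp_all add: n_def)
  have strip: "M.prob {\<omega> \<in> space M. y - h - real k - 1 < Y1 \<omega> \<and> Y2 \<omega> \<in> {h + real k<..h + real k + 1}}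
      \<le> r * (tailF G (y - h - real k - 1) * (T k - T (Suc k)))" for k
  proof -
    have "M.prob {\<omega> \<in> space M. Y2 \<omega> \<in> {h + real k<..h + real k + 1}} = T k - T (Suc k)"
      using M.prob_greaterThanAtMost[of Y2 "h + real k" "h + real k + 1"] by (simp add: T_def add_ac)
    with cond[of "{h + real k<..h + real k + 1}" "y - h - real k - 1"] show ?thesis
      by (simp add: mult.assoc)
  qed
  have "M.prob {\<omega> \<in> space M. Y2 \<omega> \<in> {h + real n<..}} \<le> M.prob {\<omega> \<in> space M. Y2 \<omega> > y - h}"
    using n by (intro M.finite_measure_mono) auto
  then have top: "M.prob {\<omega> \<in> space M. h < Y1 \<omega> \<and> Y2 \<omega> \<in> {h + real n<..}}
      \<le> r * tailF G h * M.prob {\<omega> \<in> space M. Y2 \<omega> > y - h}"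
    using \<open>0 \<le> r\<close> tailF_nonneg[of h]
    by (intro order_trans[OF cond mult_left_mono]) simp_all
  have "(\<Sum>k<n. tailF G (y - h - real k - 1) * (T k - T (Suc k)))
      \<le> K * (tailF G (y - h - 1) * tailF G h
             + measure (G \<Otimes>\<^sub>M G) {p. y - 1 < fst p + snd p \<and> h - 2 < fst p \<and> h < snd p})"
    using Y2_tail \<open>0 \<le> K\<close> n by (intro sum_tailF_weighted_increments_le) (auto simp: T_def)
  also have "\<dots> \<le> K * both_large_tail_bound h y"
    using measure_pair_both_greater_le[of "h - 2" h "y - 1"] \<open>0 \<le> K\<close> \<open>2 \<le> h\<close> \<open>2 * h \<le> y\<close>
    by (intro mult_left_mono) (auto simp: both_large_tail_bound_def algebra_simps)
  finally have "r * (\<Sum>k<n. tailF G (y - h - real k - 1) * (T k - T (Suc k)))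
      \<le> r * K * both_large_tail_bound h y"
    using \<open>0 \<le> r\<close> by (simp add: mult_left_mono mult.assoc)
  moreover have "(\<Sum>k<n. M.prob {\<omega> \<in> space M. y - h - real k - 1 < Y1 \<omega> \<and> Y2 \<omega> \<in> {h + real k<..h + real k + 1}})
      \<le> r * (\<Sum>k<n. tailF G (y - h - real k - 1) * (T k - T (Suc k)))"
    unfolding sum_distrib_left by (intro sum_mono strip)
  ultimately show ?thesis
    using M.prob_both_greater_le_strips[of Y1 Y2 y h n] top by simp
qed

end

section \<open>Subexponential distributions\<close>

locale subexponential_nonneg = nonneg_real_distribution +
  assumes tailF_convolution_ratio: "((\<lambda>y. tailF (G \<star> G) y / tailF G y) \<longlongrightarrow> 2) at_top"
begin

lemma tailF_pos: "0 < tailF G y"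
proof -
  obtain Y where Y: "\<And>x. x \<ge> Y \<Longrightarrow> 1 < tailF (G \<star> G) x / tailF G x"
    using order_tendstoD(1)[OF tailF_convolution_ratio, of 1] by (auto simp: eventually_at_top_linorder)
  have "tailF G (max y Y) \<noteq> 0" using Y[of "max y Y"] by auto
  then have "0 < tailF G (max y Y)" using tailF_nonneg[of "max y Y"] by linarith
  also have "\<dots> \<le> tailF G y" by (rule tailF_antimono) simp
  finally show ?thesis .
qed

lemma tailF_shift_ratio:
  assumes "0 \<le> s"
  shows "((\<lambda>y. tailF G (y - s) / tailF G y) \<longlongrightarrow> 1) at_top"
proof -
  define g where "g = tailF G s"
  have "0 < g" unfolding g_def by (rule tailF_pos)
  define Q where "Q y = (tailF (G \<star> G) y / tailF G y - 2 + g) / (g - tailF G y)" for y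
  have "(Q \<longlongrightarrow> (2 - 2 + g) / (g - 0)) at_top"
    unfolding Q_def using \<open>0 < g\<close> by (intro tendsto_intros tailF_convolution_ratio tailF_tendsto_0) auto
  then have Q_lim: "(Q \<longlongrightarrow> 1) at_top" using \<open>0 < g\<close> by simp
  have "\<forall>\<^sub>F y in at_top. tailF G y < g"
    using order_tendstoD(2)[OF tailF_tendsto_0 \<open>0 < g\<close>] .
  then have upper: "\<forall>\<^sub>F y in at_top. tailF G (y - s) / tailF G y \<le> Q y"
    using eventually_ge_at_top[of s]
  proof eventually_elim
    case (elim y)
    have "tailF G y + (1 - g) * tailF G y + (g - tailF G y) * tailF G (y - s)
        \<le> tailF G y * (tailF (G \<star> G) y / tailF G y)"
      using tailF_convolution_ge[OF assms elim(2)] tailF_pos[of y] by (simp add: g_def)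
    then have "tailF G (y - s) * (g - tailF G y) \<le> tailF G y * (tailF (G \<star> G) y / tailF G y - 2 + g)"
      by (simp add: algebra_simps)
    then show ?case
      using elim(1) tailF_pos[of y] by (simp add: Q_def field_simps)
  qed
  have lower: "\<forall>\<^sub>F y in at_top. 1 \<le> tailF G (y - s) / tailF G y"
    using tailF_antimono[of "y - s" y for y] tailF_pos assms by simp
  show ?thesis by (rule real_tendsto_sandwich[OF lower upper tendsto_const Q_lim])
qed

lemma tailF_convolution_shift_ratio:
  assumes "0 \<le> s"
  shows "((\<lambda>y. tailF (G \<star> G) (y - s) / tailF G y) \<longlongrightarrow> 2) at_top"
proof -
  have "((\<lambda>y. tailF (G \<star> G) (y - s) / tailF G (y - s)) \<longlongrightarrow> 2) at_top"
    by (rule filterlim_compose[OF tailF_convolution_ratio filterlim_minus_const_at_top])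
  then have "((\<lambda>y. tailF (G \<star> G) (y - s) / tailF G (y - s) * (tailF G (y - s) / tailF G y)) \<longlongrightarrow> 2 * 1) at_top"
    by (intro tendsto_mult tailF_shift_ratio assms)
  moreover have "tailF G y \<noteq> 0" for y using tailF_pos[of y] by simp
  ultimately show ?thesis by simp
qed

lemma both_large_tail_bound_ratio:
  assumes "0 \<le> h"
  shows "((\<lambda>y. both_large_tail_bound h y / tailF G y) \<longlongrightarrow> 2 * tailF G h + tailF G (h - 2)) at_top"
proof -
  have "((\<lambda>y. tailF G (y - (h + 1)) / tailF G y * tailF G h + tailF (G \<star> G) (y - 1) / tailF G y
      - (2 - tailF G (h - 2) - tailF G h) * (tailF G (y - 1) / tailF G y))
      \<longlongrightarrow> 1 * tailF G h + 2 - (2 - tailF G (h - 2) - tailF G h) * 1) at_top"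
    using assms by (intro tendsto_intros tailF_shift_ratio tailF_convolution_shift_ratio) auto
  then show ?thesis
    by (simp add: both_large_tail_bound_def diff_divide_distrib add_divide_distrib algebra_simps)
qed

lemma ratio_limsup_le_prob_add_at_level:
  fixes M :: "'b measure" and Y1 Y2 :: "'b \<Rightarrow> real"
  assumes "prob_space M" and [measurable]: "Y1 \<in> borel_measurable M" "Y2 \<in> borel_measurable M"
    and "\<And>a B. B \<in> sets borel \<Longrightarrow> measure M {\<omega> \<in> space M. a < Y1 \<omega> \<and> Y2 \<omega> \<in> B}
      \<le> r * tailF G a * measure M {\<omega> \<in> space M. Y2 \<omega> \<in> B}"
    and Y1_tail: "ratio_limsup_le (\<lambda>y. measure M {\<omega> \<in> space M. Y1 \<omega> > y}) c1 (tailF G)"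
    and Y2_tail: "ratio_limsup_le (\<lambda>y. measure M {\<omega> \<in> space M. Y2 \<omega> > y}) c2 (tailF G)"
    and Y2_bound: "\<And>t. h \<le> t \<Longrightarrow> measure M {\<omega> \<in> space M. Y2 \<omega> > t} \<le> K * tailF G t"
    and "0 \<le> c1" "0 \<le> c2" "0 < r" "0 < K" "2 \<le> h"
  shows "ratio_limsup_le (\<lambda>y. measure M {\<omega> \<in> space M. Y1 \<omega> + Y2 \<omega> > y})
    (c1 + (1 + r * tailF G h) * c2 + r * K * (2 * tailF G h + tailF G (h - 2))) (tailF G)"
proof -
  interpret M: prob_space M by fact
  have tailF_ge_0: "\<forall>\<^sub>F y in at_top. 0 \<le> tailF G y" and tailF_gt_0: "\<forall>\<^sub>F y in at_top. 0 < tailF G y"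
    by (simp_all add: tailF_nonneg tailF_pos)
  have shift: "ratio_limsup_le (\<lambda>y. tailF G (y - h)) 1 (tailF G)"
    using \<open>2 \<le> h\<close> by (intro ratio_limsup_le_tendsto tailF_shift_ratio tailF_gt_0) simp
  have "ratio_limsup_le (\<lambda>y. M.prob {\<omega> \<in> space M. Y1 \<omega> > y - h}) (c1 * 1) (tailF G)"
    using ratio_limsup_le_shift[OF Y1_tail] shift \<open>0 \<le> c1\<close> tailF_ge_0
    by (intro ratio_limsup_le_trans) auto
  moreover have "ratio_limsup_le (\<lambda>y. (1 + r * tailF G h) * M.prob {\<omega> \<in> space M. Y2 \<omega> > y - h})
      ((1 + r * tailF G h) * (c2 * 1)) (tailF G)"
    using ratio_limsup_le_shift[OF Y2_tail] shift \<open>0 \<le> c2\<close> tailF_ge_0 \<open>0 < r\<close> tailF_nonneg[of h]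
    by (intro ratio_limsup_le_scale ratio_limsup_le_trans) (auto simp: add_pos_nonneg)
  moreover have "ratio_limsup_le (\<lambda>y. r * K * both_large_tail_bound h y)
      (r * K * (2 * tailF G h + tailF G (h - 2))) (tailF G)"
    using \<open>0 < r\<close> \<open>0 < K\<close> \<open>2 \<le> h\<close> tailF_gt_0
    by (intro ratio_limsup_le_scale ratio_limsup_le_tendsto both_large_tail_bound_ratio) auto
  ultimately have "ratio_limsup_le (\<lambda>y. M.prob {\<omega> \<in> space M. Y1 \<omega> > y - h}
      + (1 + r * tailF G h) * M.prob {\<omega> \<in> space M. Y2 \<omega> > y - h} + r * K * both_large_tail_bound h y)
      (c1 + (1 + r * tailF G h) * c2 + r * K * (2 * tailF G h + tailF G (h - 2))) (tailF G)"
    using ratio_limsup_le_add by fastforce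
  moreover have "\<forall>\<^sub>F y in at_top. M.prob {\<omega> \<in> space M. Y1 \<omega> + Y2 \<omega> > y} \<le> M.prob {\<omega> \<in> space M. Y1 \<omega> > y - h}
      + (1 + r * tailF G h) * M.prob {\<omega> \<in> space M. Y2 \<omega> > y - h} + r * K * both_large_tail_bound h y"
    using eventually_ge_at_top[of "2 * h"]
  proof eventually_elim
    case (elim y)
    show ?case
      using M.prob_add_greater_le[of Y1 Y2 y h]
        prob_both_greater_le_tailF[OF assms(1-4) Y2_bound _ _ \<open>2 \<le> h\<close> elim] \<open>0 < r\<close> \<open>0 < K\<close>
      by (simp add: algebra_simps)
  qed
  ultimately show ?thesis by (rule ratio_limsup_le_mono)
qed

lemma ratio_limsup_le_prob_add:
  fixes M :: "'b measure" and Y1 Y2 :: "'b \<Rightarrow> real"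
  assumes "prob_space M" and [measurable]: "Y1 \<in> borel_measurable M" "Y2 \<in> borel_measurable M"
    and "\<And>a B. B \<in> sets borel \<Longrightarrow> measure M {\<omega> \<in> space M. a < Y1 \<omega> \<and> Y2 \<omega> \<in> B}
      \<le> r * tailF G a * measure M {\<omega> \<in> space M. Y2 \<omega> \<in> B}"
    and "ratio_limsup_le (\<lambda>y. measure M {\<omega> \<in> space M. Y1 \<omega> > y}) c1 (tailF G)"
    and Y2_tail: "ratio_limsup_le (\<lambda>y. measure M {\<omega> \<in> space M. Y2 \<omega> > y}) c2 (tailF G)"
    and "0 \<le> c1" "0 \<le> c2" "0 < r"
  shows "ratio_limsup_le (\<lambda>y. measure M {\<omega> \<in> space M. Y1 \<omega> + Y2 \<omega> > y}) (c1 + c2) (tailF G)"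
proof (rule ratio_limsup_le_limit)
  define K where "K = c2 + 1"
  obtain t\<^sub>0 where t\<^sub>0: "\<And>t. t \<ge> t\<^sub>0 \<Longrightarrow> measure M {\<omega> \<in> space M. Y2 \<omega> > t} \<le> K * tailF G t"
    using ratio_limsup_leD[OF Y2_tail, of 1] by (auto simp: K_def eventually_at_top_linorder)
  show "\<forall>\<^sub>F h in at_top. ratio_limsup_le (\<lambda>y. measure M {\<omega> \<in> space M. Y1 \<omega> + Y2 \<omega> > y})
    (c1 + (1 + r * tailF G h) * c2 + r * K * (2 * tailF G h + tailF G (h - 2))) (tailF G)"
    using eventually_ge_at_top[of "max 2 t\<^sub>0"]
  proof eventually_elim
    case (elim h)
    then show ?case
      using assms t\<^sub>0 \<open>0 \<le> c2\<close> by (intro ratio_limsup_le_prob_add_at_level) (auto simp: K_def)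
  qed
  have "((\<lambda>h. c1 + (1 + r * tailF G h) * c2 + r * K * (2 * tailF G h + tailF G (h - 2)))
      \<longlongrightarrow> c1 + (1 + r * 0) * c2 + r * K * (2 * 0 + 0)) at_top"
    by (intro tendsto_intros tailF_tendsto_0 filterlim_compose[OF tailF_tendsto_0 filterlim_minus_const_at_top])
  then show "((\<lambda>h. c1 + (1 + r * tailF G h) * c2 + r * K * (2 * tailF G h + tailF G (h - 2)))
      \<longlongrightarrow> c1 + c2) at_top"
    by simp
qed (simp_all add: tailF_nonneg)

end

lemma subexponential_nonneg_pos_part_distr:
  assumes "subexponential F"
  shows "subexponential_nonneg (pos_part_distr F)"
proof -
  have F: "prob_space F" "sets F = sets borel" using assms by (simp_all add: subexponential_def)
  interpret real_distribution "pos_part_distr F"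
    by (rule real_distribution_pos_part_distr[OF F])
  show ?thesis
    using assms measure_pos_part_distr_lessThan_0[OF F(2)]
    by unfold_locales (simp_all add: subexponential_def)
qed

lemma subexponential_tailF_pos:
  assumes "subexponential F"
  shows "0 < tailF F y"
proof -
  have F: "prob_space F" "sets F = sets borel" using assms by (simp_all add: subexponential_def)
  interpret G: subexponential_nonneg "pos_part_distr F"
    by (rule subexponential_nonneg_pos_part_distr[OF assms])
  have "0 < tailF (pos_part_distr F) (max y 0)" by (rule G.tailF_pos)
  also have "\<dots> = tailF F (max y 0)" by (simp add: tailF_pos_part_distr[OF F(2)])
  also have "\<dots> \<le> tailF F y"
  proof -
    interpret F: prob_space F by (fact F(1))
    show ?thesis unfolding tailF_def using F(2) by (intro diff_left_mono F.finite_measure_mono) auto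
  qed
  finally show ?thesis .
qed

theorem lemmaA2:
  fixes F :: "real measure" and M Fs :: "'a measure"
    and Y1 Y2 :: "'a \<Rightarrow> real" and c1 c2 r :: real
  assumes "subexponential F"
    and "prob_space M"
    and "subalgebra M Fs"
    and "Y1 \<in> borel_measurable M" and "Y2 \<in> borel_measurable M"
    and "cond_indep_rv M Fs Y1 Y2"
    and "c1 \<ge> 0" and "c2 \<ge> 0" and "r > 0"
    and "asymp_le_mult (\<lambda>y. prob_space.prob M {\<omega> \<in> space M. Y1 \<omega> > y}) c1 (tailF F)"
    and "asymp_le_mult (\<lambda>y. prob_space.prob M {\<omega> \<in> space M. Y2 \<omega> > y}) c2 (tailF F)"
    and "\<forall>y. AE \<omega> in M. cprob_given M Fs {\<omega> \<in> space M. Y1 \<omega> > y} \<omega> \<le> r * tailF F y"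
  shows "asymp_le_mult (\<lambda>y. prob_space.prob M {\<omega> \<in> space M. Y1 \<omega> + Y2 \<omega> > y})
           (c1 + c2) (tailF F)"
proof -
  define G where "G = pos_part_distr F"
  interpret G: subexponential_nonneg G
    unfolding G_def by (rule subexponential_nonneg_pos_part_distr[OF assms(1)])
  have sets_F: "sets F = sets borel" using assms(1) by (simp add: subexponential_def)
  have tailF_F_pos: "0 < tailF F y" for y by (rule subexponential_tailF_pos[OF assms(1)])
  have tailF_eq: "\<forall>\<^sub>F y in at_top. tailF F y = tailF G y"
    using eventually_ge_at_top[of 0] by eventually_elim (simp add: G_def tailF_pos_part_distr[OF sets_F])
  have cond: "measure M {\<omega> \<in> space M. a < Y1 \<omega> \<and> Y2 \<omega> \<in> B} \<le> r * tailF G a * measure M {\<omega> \<in> space M. Y2 \<omega> \<in> B}"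
    if "B \<in> sets borel" for a B
  proof (rule prob_cond_indep_le[OF assms(2-6) _ that])
    have "r * tailF F a \<le> r * tailF G a"
      using tailF_le_tailF_pos_part_distr[OF sets_F, of a] \<open>r > 0\<close> by (simp add: G_def)
    with spec[OF assms(12), of a]
    show "AE \<omega> in M. cprob_given M Fs {\<omega> \<in> space M. Y1 \<omega> > a} \<omega> \<le> r * tailF G a"
      by (simp add: eventually_mono)
  qed
  have "ratio_limsup_le (\<lambda>y. measure M {\<omega> \<in> space M. Y1 \<omega> + Y2 \<omega> > y}) (c1 + c2) (tailF G)"
    using assms(7-11) tailF_F_pos
    by (intro G.ratio_limsup_le_prob_add[OF assms(2,4,5) cond]
        ratio_limsup_le_cong[OF tailF_eq, THEN iffD1] asymp_le_mult_imp_ratio_limsup_le) auto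
  then show ?thesis
    using assms(7,8) tailF_F_pos
    by (intro ratio_limsup_le_imp_asymp_le_mult ratio_limsup_le_cong[OF tailF_eq, THEN iffD2]) auto
qed

end
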